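(* Let $(X,d,\alpha)$ be a computable metric space which is locally computable. Let $S$ be a co-computably enumerable closed set in $(X,d,\alpha)$ which is compact. Then $S$ is a semi-computable compact set in $(X,d,\alpha)$.
   Context: A computable metric space is a triple $(X,d,\alpha)$ where $(X,d)$ is a metric space and $\alpha=(\alpha_i)_{i\in\mathbb N}$ is a sequence with dense range in $(X,d)$ such that $(i,j)\mapsto d(\alpha_i,\alpha_j)$ is a computable function $\mathbb N^2\to\mathbb R$ (a function $g:\mathbb N^k\to\mathbb R$ is computable if there is a computable $G:\mathbb N^{k+1}\to\mathbb Q$ with $|g(x)-G(x,i)|<2^{-i}$ for all $x,i$). Fix a computable $q:\mathbb N\to\mathbb Q$ whose image is the set of positive rationals and computable $\tau_1,\tau_2:\mathbb N\to\mathbb N$ with $\{(\tau_1(i),\tau_2(i)):i\in\mathbb N\}=\mathbb N^2$; let $\lambda_i=\alpha_{\tau_1(i)}$, $\rho_i=q_{\tau_2(i)}$, $I_i=B(\lambda_i,\rho_i)$ (open ball). Fix computable $\sigma:\mathbb N^2\to\mathbb N$, $\eta:\mathbb N\to\mathbb N$ such that $\{(\sigma(j,0),\dots,\sigma(j,\eta(j))):j\in\mathbb N\}$ is the set of all nonempty finite sequences in $\mathbb N$; let $[j]=\{\sigma(j,i):0\le i\le\eta(j)\}$ and $J_j=\bigcup_{i\in[j]}I_i$. A compact $K$ is semi-computable compact if $\{j: K\subseteq J_j\}$ is computably enumerable, and computable compact if additionally $\{i:K\cap I_i\neq\emptyset\}$ is computably enumerable. A closed set $S$ is co-computably enumerable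 closed if there is a computable $f:\mathbb N\to\mathbb N$ with $X\setminus S=\bigcup_{i\in\mathbb N}I_{f(i)}$. $(X,d,\alpha)$ is locally computable if every compact set in $(X,d)$ is contained in some computable compact set. *)

theory Defs
  imports "HOL-Analysis.Analysis"
begin

datatype recf =
    Zero
  | Succ
  | Proj nat
  | Comp recf "recf list"
  | PrimRec recf recf
  | Mu recf

inductive eval :: "recf \<Rightarrow> nat list \<Rightarrow> nat \<Rightarrow> bool" where
  eval_Zero: "eval Zero xs 0"
| eval_Succ: "eval Succ (x # xs) (Suc x)"
| eval_Proj: "i < length xs \<Longrightarrow> eval (Proj i) xs (xs ! i)"
| eval_Comp: "length ys = length gs \<Longrightarrow> (\<forall>k < length gs. eval (gs ! k) xs (ys ! k))
      \<Longrightarrow> eval f ys y \<Longrightarrow> eval (Comp f gs) xs y"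
| eval_Pr0: "eval f xs y \<Longrightarrow> eval (PrimRec f g) (0 # xs) y"
| eval_PrS: "eval (PrimRec f g) (n # xs) y \<Longrightarrow> eval g (y # n # xs) z
      \<Longrightarrow> eval (PrimRec f g) (Suc n # xs) z"
| eval_Mu: "eval f (n # xs) 0 \<Longrightarrow> (\<forall>m < n. \<exists>k. k > 0 \<and> eval f (m # xs) k)
      \<Longrightarrow> eval (Mu f) xs n"

definition computable_nat :: "nat \<Rightarrow> (nat list \<Rightarrow> nat) \<Rightarrow> bool" where
  "computable_nat k f \<longleftrightarrow> (\<exists>c. \<forall>xs. length xs = k \<longrightarrow> eval c xs (f xs))"

definition computable1 :: "(nat \<Rightarrow> nat) \<Rightarrow> bool" where
  "computable1 f \<longleftrightarrow> computable_nat 1 (\<lambda>xs. f (xs ! 0))"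

definition computable2 :: "(nat \<Rightarrow> nat \<Rightarrow> nat) \<Rightarrow> bool" where
  "computable2 f \<longleftrightarrow> computable_nat 2 (\<lambda>xs. f (xs ! 0) (xs ! 1))"

definition computable_rat :: "nat \<Rightarrow> (nat list \<Rightarrow> rat) \<Rightarrow> bool" where
  "computable_rat k g \<longleftrightarrow> (\<exists>s n d. computable_nat k s \<and> computable_nat k n \<and> computable_nat k d \<and>
      (\<forall>xs. length xs = k \<longrightarrow>
         g xs = (if s xs = 0 then 1 else -1) * of_nat (n xs) / of_nat (d xs)))"

definition computable_rat1 :: "(nat \<Rightarrow> rat) \<Rightarrow> bool" where
  "computable_rat1 g \<longleftrightarrow> computable_rat 1 (\<lambda>xs. g (xs ! 0))"

definition computable_real2 :: "(nat \<Rightarrow> nat \<Rightarrow> real) \<Rightarrow> bool" where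
  "computable_real2 g \<longleftrightarrow> (\<exists>G :: nat \<Rightarrow> nat \<Rightarrow> nat \<Rightarrow> rat.
      computable_rat 3 (\<lambda>xs. G (xs ! 0) (xs ! 1) (xs ! 2)) \<and>
      (\<forall>x y i. \<bar>g x y - real_of_rat (G x y i)\<bar> < 1 / 2 ^ i))"

definition ce_set :: "nat set \<Rightarrow> bool" where
  "ce_set A \<longleftrightarrow> (\<exists>c. \<forall>n. n \<in> A \<longleftrightarrow> (\<exists>y. eval c [n] y))"

definition computable_metric_space :: "(nat \<Rightarrow> 'a::metric_space) \<Rightarrow> bool" where
  "computable_metric_space \<alpha> \<longleftrightarrow> closure (range \<alpha>) = UNIV \<and>
      computable_real2 (\<lambda>i j. dist (\<alpha> i) (\<alpha> j))"

definition admissible_enums ::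
  "(nat \<Rightarrow> rat) \<Rightarrow> (nat \<Rightarrow> nat) \<Rightarrow> (nat \<Rightarrow> nat) \<Rightarrow> (nat \<Rightarrow> nat \<Rightarrow> nat) \<Rightarrow> (nat \<Rightarrow> nat) \<Rightarrow> bool" where
  "admissible_enums q \<tau>1 \<tau>2 \<sigma> \<eta> \<longleftrightarrow>
     computable_rat1 q \<and> range q = {r. r > 0} \<and>
     computable1 \<tau>1 \<and> computable1 \<tau>2 \<and> range (\<lambda>i. (\<tau>1 i, \<tau>2 i)) = UNIV \<and>
     computable2 \<sigma> \<and> computable1 \<eta> \<and>
     range (\<lambda>j. map (\<sigma> j) [0..<Suc (\<eta> j)]) = {xs. xs \<noteq> []}"

definition rball :: "(nat \<Rightarrow> 'a::metric_space) \<Rightarrow> (nat \<Rightarrow> rat) \<Rightarrow> (nat \<Rightarrow> nat) \<Rightarrow> (nat \<Rightarrow> nat)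
    \<Rightarrow> nat \<Rightarrow> 'a set" where
  "rball \<alpha> q \<tau>1 \<tau>2 i = ball (\<alpha> (\<tau>1 i)) (real_of_rat (q (\<tau>2 i)))"

definition rballs :: "(nat \<Rightarrow> 'a::metric_space) \<Rightarrow> (nat \<Rightarrow> rat) \<Rightarrow> (nat \<Rightarrow> nat) \<Rightarrow> (nat \<Rightarrow> nat)
    \<Rightarrow> (nat \<Rightarrow> nat \<Rightarrow> nat) \<Rightarrow> (nat \<Rightarrow> nat) \<Rightarrow> nat \<Rightarrow> 'a set" where
  "rballs \<alpha> q \<tau>1 \<tau>2 \<sigma> \<eta> j = (\<Union>i \<in> {\<sigma> j k | k. k \<le> \<eta> j}. rball \<alpha> q \<tau>1 \<tau>2 i)"

definition semi_computable_compact where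
  "semi_computable_compact \<alpha> q \<tau>1 \<tau>2 \<sigma> \<eta> K \<longleftrightarrow>
     compact K \<and> ce_set {j. K \<subseteq> rballs \<alpha> q \<tau>1 \<tau>2 \<sigma> \<eta> j}"

definition computable_compact where
  "computable_compact \<alpha> q \<tau>1 \<tau>2 \<sigma> \<eta> K \<longleftrightarrow>
     semi_computable_compact \<alpha> q \<tau>1 \<tau>2 \<sigma> \<eta> K \<and>
     ce_set {i. K \<inter> rball \<alpha> q \<tau>1 \<tau>2 i \<noteq> {}}"

definition co_ce_closed where
  "co_ce_closed \<alpha> q \<tau>1 \<tau>2 S \<longleftrightarrow> closed S \<and>
     (\<exists>f. computable1 f \<and> - S = (\<Union>i. rball \<alpha> q \<tau>1 \<tau>2 (f i)))"

definition locally_computable where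
  "locally_computable \<alpha> q \<tau>1 \<tau>2 \<sigma> \<eta> \<longleftrightarrow>
     (\<forall>K. compact K \<longrightarrow> (\<exists>L. computable_compact \<alpha> q \<tau>1 \<tau>2 \<sigma> \<eta> L \<and> K \<subseteq> L))"

end

theory Submission
  imports Defs
begin

text \<open>
  Local computability gives a computable compact set \<open>L \<supseteq> S\<close>. Since \<open>S\<close> is compact and its
  complement is the union of the balls \<open>I (f i)\<close>, a finite union of balls \<open>J j\<close> covers \<open>S\<close> iff
  \<open>L\<close> is covered by \<open>J j\<close> together with \<open>I (f 0), \<dots>, I (f (N - 1))\<close> for some \<open>N\<close>, i.e. iff
  \<open>L \<subseteq> J j'\<close> for some \<open>j'\<close> whose balls are among those of \<open>J j\<close> and these.
  The set of such \<open>j'\<close> is c.e. and the condition on \<open>(j', j, N)\<close> is decidable, so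
  \<open>{j. S \<subseteq> J j}\<close> is the projection of a c.e. set along a decidable relation, hence c.e.
  That last step is dovetailing; it rests on the fact that every partial recursive function has a
  total computable clock, which reports at stage \<open>t\<close> whether the computation has halted.
\<close>

inductive_cases eval_ZeroE: "eval Zero xs y"
inductive_cases eval_SuccE: "eval Succ xs y"
inductive_cases eval_ProjE: "eval (Proj i) xs y"
inductive_cases eval_CompE: "eval (Comp f gs) xs y"
inductive_cases eval_PrimRecE: "eval (PrimRec f g) xs y"
inductive_cases eval_MuE: "eval (Mu f) xs y"

lemma eval_deterministic: "eval c xs y \<Longrightarrow> eval c xs y' \<Longrightarrow> y = y'"
proof (induction arbitrary: y' rule: eval.induct)
  case (eval_Comp ys gs xs f y)
  from eval_Comp.prems obtain ys' where len: "length ys' = length gs"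
    and args: "\<forall>k<length gs. eval (gs ! k) xs (ys' ! k)" and val: "eval f ys' y'"
    by (auto elim: eval_CompE)
  have "ys = ys'"
    by (rule nth_equalityI) (use eval_Comp.hyps(1) eval_Comp.IH(1) len args in auto)
  then show ?case using eval_Comp.IH(2) val by blast
next
  case (eval_Mu f n xs)
  from eval_Mu.prems have zero: "eval f (y' # xs) 0" and pos: "\<forall>m<y'. \<exists>k>0. eval f (m # xs) k"
    by (auto elim: eval_MuE)
  show ?case
  proof (rule linorder_cases[of n y'])
    assume "n < y'"
    then obtain k where "k > 0" "eval f (n # xs) k" using pos by blast
    then show ?thesis using eval_Mu.IH(1) by force
  next
    assume "y' < n"
    then obtain k where "k > 0" "\<forall>z. eval f (y' # xs) z \<longrightarrow> k = z"
      using eval_Mu.IH(2) by blast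
    then show ?thesis using zero by force
  qed
next
  case (eval_Pr0 f xs y)
  from eval_Pr0.prems show ?case by (rule eval_PrimRecE) (use eval_Pr0.IH in auto)
next
  case (eval_PrS f g n xs y z)
  from eval_PrS.prems show ?case by (rule eval_PrimRecE) (use eval_PrS.IH in auto)
qed (auto elim: eval_ZeroE eval_SuccE eval_ProjE)

subsection \<open>Total computable functions\<close>

lemma computable_nat_cong:
  "computable_nat k F \<Longrightarrow> (\<And>xs. length xs = k \<Longrightarrow> F xs = G xs) \<Longrightarrow> computable_nat k G"
  unfolding computable_nat_def by simp

lemma computable_nat_proj: "i < k \<Longrightarrow> computable_nat k (\<lambda>xs. xs ! i)"
  unfolding computable_nat_def by (blast intro: eval_Proj)

definition computable_vec :: "nat \<Rightarrow> nat \<Rightarrow> (nat list \<Rightarrow> nat list) \<Rightarrow> bool" where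
  "computable_vec k m A \<longleftrightarrow>
     (\<forall>xs. length xs = k \<longrightarrow> length (A xs) = m) \<and> (\<forall>i<m. computable_nat k (\<lambda>xs. A xs ! i))"

lemma computable_nat_comp:
  assumes F: "computable_nat m F" and A: "computable_vec k m A"
  shows "computable_nat k (\<lambda>xs. F (A xs))"
proof -
  obtain f where f: "\<And>ys. length ys = m \<Longrightarrow> eval f ys (F ys)"
    using F unfolding computable_nat_def by blast
  have "\<forall>i<m. \<exists>g. \<forall>xs. length xs = k \<longrightarrow> eval g xs (A xs ! i)"
    using A unfolding computable_vec_def computable_nat_def by blast
  then obtain g where g: "\<And>i xs. i < m \<Longrightarrow> length xs = k \<Longrightarrow> eval (g i) xs (A xs ! i)"
    by metis
  have "eval (Comp f (map g [0..<m])) xs (F (A xs))" if "length xs = k" for xs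
  proof -
    have len: "length (A xs) = m" using that A by (simp add: computable_vec_def)
    show ?thesis
      by (rule eval_Comp[where ys = "A xs"]) (simp_all add: len g f that)
  qed
  then show ?thesis unfolding computable_nat_def by blast
qed

lemma computable_vec_Nil: "computable_vec k 0 (\<lambda>xs. [])"
  by (simp add: computable_vec_def)

lemma computable_vec_Cons:
  assumes "computable_nat k a" and "computable_vec k m A"
  shows "computable_vec k (Suc m) (\<lambda>xs. a xs # A xs)"
  unfolding computable_vec_def
proof (intro conjI allI impI)
  fix i assume "i < Suc m"
  then show "computable_nat k (\<lambda>xs. (a xs # A xs) ! i)"
    using assms by (cases i) (simp_all add: computable_vec_def)
qed (use assms in \<open>simp add: computable_vec_def\<close>)

lemma computable_vec_drop:
  assumes "n \<le> k" and "m = k - n"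
  shows "computable_vec k m (drop n)"
proof -
  have "computable_nat k (\<lambda>xs. drop n xs ! i)" if "i < k - n" for i
    by (rule computable_nat_cong[OF computable_nat_proj[of "n + i"]]) (use that in auto)
  then show ?thesis using assms by (simp add: computable_vec_def)
qed

lemma computable_vec_map:
  "(\<And>G. G \<in> set Gs \<Longrightarrow> computable_nat k G) \<Longrightarrow>
     computable_vec k (length Gs) (\<lambda>xs. map (\<lambda>G. G xs) Gs)"
  by (induction Gs) (simp_all add: computable_vec_Nil computable_vec_Cons)

lemma computable1_comp:
  assumes "computable1 f" and "computable_nat k A"
  shows "computable_nat k (\<lambda>xs. f (A xs))"
proof -
  have "computable_vec k 1 (\<lambda>xs. [A xs])"
    using computable_vec_Cons[OF assms(2) computable_vec_Nil] by simp
  from computable_nat_comp[OF assms(1)[unfolded computable1_def] this] show ?thesis by simp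
qed

lemma computable2_comp:
  assumes "computable2 f" and "computable_nat k A" and "computable_nat k B"
  shows "computable_nat k (\<lambda>xs. f (A xs) (B xs))"
proof -
  have "computable_vec k 2 (\<lambda>xs. [A xs, B xs])"
    using computable_vec_Cons[OF assms(2) computable_vec_Cons[OF assms(3) computable_vec_Nil]]
    by (simp add: numeral_2_eq_2)
  from computable_nat_comp[OF assms(1)[unfolded computable2_def] this] show ?thesis by simp
qed

lemma computable1_Suc: "computable1 Suc"
proof -
  have "eval Succ xs (Suc (xs ! 0))" if "length xs = 1" for xs
    using that eval_Succ[of "xs ! 0" "[]"] by (cases xs) auto
  then show ?thesis unfolding computable1_def computable_nat_def by blast
qed

lemma computable_nat_const: "computable_nat k (\<lambda>xs. n)"
proof (induction n)
  case 0
  show ?case unfolding computable_nat_def by (blast intro: eval_Zero)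
next
  case (Suc n)
  show ?case by (rule computable1_comp[OF computable1_Suc Suc])
qed

lemma computable_nat_rec_nat:
  assumes F: "computable_nat k F" and G: "computable_nat (Suc (Suc k)) G"
  shows "computable_nat (Suc k) (\<lambda>xs. rec_nat (F (tl xs)) (\<lambda>i y. G (y # i # tl xs)) (hd xs))"
proof -
  obtain f where f: "\<And>xs. length xs = k \<Longrightarrow> eval f xs (F xs)"
    using F unfolding computable_nat_def by blast
  obtain g where g: "\<And>xs. length xs = Suc (Suc k) \<Longrightarrow> eval g xs (G xs)"
    using G unfolding computable_nat_def by blast
  have "eval (PrimRec f g) (n # xs) (rec_nat (F xs) (\<lambda>i y. G (y # i # xs)) n)"
    if "length xs = k" for n xs
  proof (induction n)
    case 0
    show ?case using f[OF that] by (simp add: eval_Pr0)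
  next
    case (Suc n)
    show ?case using eval_PrS[OF Suc g] that by simp
  qed
  then have "eval (PrimRec f g) xs (rec_nat (F (tl xs)) (\<lambda>i y. G (y # i # tl xs)) (hd xs))"
    if "length xs = Suc k" for xs
    using that by (cases xs) auto
  then show ?thesis
    unfolding computable_nat_def by blast
qed

lemma computable2_plus: "computable2 (+)"
proof -
  have "rec_nat b (\<lambda>i y. Suc y) a = a + (b::nat)" for a b
    by (induction a) simp_all
  moreover have "computable_nat (Suc (Suc 0)) (\<lambda>xs. rec_nat (tl xs ! 0) (\<lambda>i y. Suc y) (hd xs))"
    using computable_nat_rec_nat[OF computable_nat_proj[of 0 "Suc 0"]
        computable1_comp[OF computable1_Suc computable_nat_proj[of 0 "Suc (Suc (Suc 0))"]]]
    by simp
  ultimately show ?thesis unfolding computable2_def numeral_2_eq_2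
    by (elim computable_nat_cong) (auto simp: length_Suc_conv)
qed

lemmas computable_nat_plus = computable2_comp[OF computable2_plus]

lemma computable2_times: "computable2 (*)"
proof -
  have "rec_nat 0 (\<lambda>i y. y + b) a = a * (b::nat)" for a b
    by (induction a) simp_all
  moreover have "computable_nat (Suc (Suc (Suc 0))) (\<lambda>zs. zs ! 0 + zs ! 2)"
    by (intro computable_nat_plus computable_nat_proj) simp_all
  from computable_nat_rec_nat[OF computable_nat_const this]
  have "computable_nat (Suc (Suc 0)) (\<lambda>xs. rec_nat 0 (\<lambda>i y. y + tl xs ! 0) (hd xs))"
    by (simp add: numeral_2_eq_2)
  ultimately show ?thesis unfolding computable2_def numeral_2_eq_2
    by (elim computable_nat_cong) (auto simp: length_Suc_conv)
qed

lemmas computable_nat_times = computable2_comp[OF computable2_times]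

lemma computable1_pred: "computable1 (\<lambda>n. n - 1)"
proof -
  have "rec_nat 0 (\<lambda>i y. i) n = n - 1" for n :: nat
    by (cases n) simp_all
  moreover have "computable_nat (Suc 0) (\<lambda>xs. rec_nat 0 (\<lambda>i y. i) (hd xs))"
    using computable_nat_rec_nat[OF computable_nat_const computable_nat_proj[of 1 "Suc (Suc 0)"]]
    by simp
  ultimately show ?thesis unfolding computable1_def One_nat_def
    by (elim computable_nat_cong) (auto simp: length_Suc_conv)
qed

lemma computable2_minus: "computable2 (-)"
proof -
  have "rec_nat b (\<lambda>i y. y - 1) a = b - (a::nat)" for a b
    by (induction a) simp_all
  moreover have "computable_nat (Suc (Suc 0)) (\<lambda>xs. rec_nat (tl xs ! 0) (\<lambda>i y. y - 1) (hd xs))"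
    using computable_nat_rec_nat[OF computable_nat_proj[of 0 "Suc 0"]
        computable1_comp[OF computable1_pred computable_nat_proj[of 0 "Suc (Suc (Suc 0))"]]]
    by simp
  ultimately have "computable2 (\<lambda>a b. b - a)"
    unfolding computable2_def numeral_2_eq_2
    by (elim computable_nat_cong) (auto simp: length_Suc_conv)
  from computable2_comp[OF this computable_nat_proj[of 1 2] computable_nat_proj[of 0 2]]
  show ?thesis unfolding computable2_def by simp
qed

lemmas computable_nat_minus = computable2_comp[OF computable2_minus]

lemma computable_nat_sum:
  assumes B: "computable_nat k B" and G: "computable_nat (Suc k) G"
  shows "computable_nat k (\<lambda>xs. \<Sum>m<B xs. G (m # xs))"
proof -
  have "computable_vec (Suc (Suc k)) (Suc k) (\<lambda>zs. zs ! 1 # drop 2 zs)"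
    by (intro computable_vec_Cons computable_nat_proj computable_vec_drop) simp_all
  from computable_nat_plus[OF computable_nat_proj computable_nat_comp[OF G this], of 0]
  have "computable_nat (Suc (Suc k)) (\<lambda>zs. zs ! 0 + G (zs ! 1 # drop 2 zs))" by simp
  from computable_nat_rec_nat[OF computable_nat_const this]
  have H: "computable_nat (Suc k) (\<lambda>xs. rec_nat 0 (\<lambda>i y. y + G (i # tl xs)) (hd xs))"
    by (simp add: numeral_2_eq_2)
  have "computable_vec k (Suc k) (\<lambda>xs. B xs # drop 0 xs)"
    by (intro computable_vec_Cons B computable_vec_drop) simp_all
  from computable_nat_comp[OF H this]
  have "computable_nat k (\<lambda>xs. rec_nat 0 (\<lambda>i y. y + G (i # xs)) (B xs))" by simp
  moreover have "rec_nat 0 (\<lambda>i y. y + G (i # xs)) n = (\<Sum>m<n. G (m # xs))" for n xs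
    by (induction n) simp_all
  ultimately show ?thesis by simp
qed

subsection \<open>Decidable relations\<close>

definition computable_pred :: "nat \<Rightarrow> (nat list \<Rightarrow> bool) \<Rightarrow> bool" where
  "computable_pred k P \<longleftrightarrow> computable_nat k (\<lambda>xs. of_bool (P xs))"

lemma computable_pred_cong:
  "computable_pred k P \<Longrightarrow> (\<And>xs. length xs = k \<Longrightarrow> P xs \<longleftrightarrow> Q xs) \<Longrightarrow> computable_pred k Q"
  unfolding computable_pred_def by (erule computable_nat_cong) simp

lemma computable_pred_eq_0:
  assumes "computable_nat k A"
  shows "computable_pred k (\<lambda>xs. A xs = 0)"
proof -
  have "computable_nat k (\<lambda>xs. 1 - A xs)"
    by (rule computable_nat_minus[OF computable_nat_const assms])
  then show ?thesis unfolding computable_pred_def by (rule computable_nat_cong) simp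
qed

lemma computable_pred_not:
  assumes "computable_pred k P"
  shows "computable_pred k (\<lambda>xs. \<not> P xs)"
proof -
  have "computable_nat k (\<lambda>xs. 1 - of_bool (P xs))"
    by (rule computable_nat_minus[OF computable_nat_const assms[unfolded computable_pred_def]])
  then show ?thesis unfolding computable_pred_def by (rule computable_nat_cong) simp
qed

lemma computable_pred_conj:
  assumes "computable_pred k P" and "computable_pred k Q"
  shows "computable_pred k (\<lambda>xs. P xs \<and> Q xs)"
  using computable_nat_times[OF assms[unfolded computable_pred_def]]
  unfolding computable_pred_def by (rule computable_nat_cong) simp

lemma computable_pred_disj:
  assumes "computable_pred k P" and "computable_pred k Q"
  shows "computable_pred k (\<lambda>xs. P xs \<or> Q xs)"
  using computable_pred_not[OF computable_pred_conj[OF computable_pred_not[OF assms(1)]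
        computable_pred_not[OF assms(2)]]]
  by (rule computable_pred_cong) simp

lemma computable_pred_le:
  assumes "computable_nat k A" and "computable_nat k B"
  shows "computable_pred k (\<lambda>xs. A xs \<le> B xs)"
  using computable_pred_eq_0[OF computable_nat_minus[OF assms]]
  by (rule computable_pred_cong) simp

lemma computable_pred_eq:
  assumes "computable_nat k A" and "computable_nat k B"
  shows "computable_pred k (\<lambda>xs. A xs = B xs)"
  using computable_pred_conj[OF computable_pred_le[OF assms] computable_pred_le[OF assms(2,1)]]
  by (rule computable_pred_cong) auto

lemma computable_nat_if:
  assumes P: "computable_pred k P" and "computable_nat k A" and "computable_nat k B"
  shows "computable_nat k (\<lambda>xs. if P xs then A xs else B xs)"
proof -
  have "computable_nat k (\<lambda>xs. of_bool (P xs) * A xs + of_bool (\<not> P xs) * B xs)"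
    using computable_pred_not[OF P] P assms(2,3) unfolding computable_pred_def
    by (intro computable_nat_plus computable_nat_times)
  then show ?thesis by (rule computable_nat_cong) simp
qed

lemma computable_pred_bex:
  assumes "computable_nat k B" and "computable_pred (Suc k) P"
  shows "computable_pred k (\<lambda>xs. \<exists>m<B xs. P (m # xs))"
  using computable_pred_not[OF computable_pred_eq_0[OF computable_nat_sum[OF assms(1)
        assms(2)[unfolded computable_pred_def]]]]
  by (rule computable_pred_cong) auto

lemma computable_pred_ball:
  assumes "computable_nat k B" and "computable_pred (Suc k) P"
  shows "computable_pred k (\<lambda>xs. \<forall>m<B xs. P (m # xs))"
  using computable_pred_not[OF computable_pred_bex[OF assms(1) computable_pred_not[OF assms(2)]]]
  by (rule computable_pred_cong) simp

subsection \<open>Clocks\<close>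

text \<open>Results are shifted by one, so that \<open>0\<close> means ``not halted by stage \<open>t\<close>''.\<close>

definition clock :: "recf \<Rightarrow> nat \<Rightarrow> (nat list \<Rightarrow> nat) \<Rightarrow> bool" where
  "clock c k F \<longleftrightarrow> (\<forall>xs. length xs = k \<longrightarrow>
     (\<forall>y. eval c xs y \<longleftrightarrow> (\<exists>t. F (t # xs) = Suc y)) \<and>
     (\<forall>t t' y. t \<le> t' \<longrightarrow> F (t # xs) = Suc y \<longrightarrow> F (t' # xs) = Suc y))"

definition has_clock :: "recf \<Rightarrow> bool" where
  "has_clock c \<longleftrightarrow> (\<forall>k. \<exists>F. computable_nat (Suc k) F \<and> clock c k F)"

lemma clock_halts:
  "clock c k F \<Longrightarrow> length xs = k \<Longrightarrow> eval c xs y \<longleftrightarrow> (\<exists>t. F (t # xs) = Suc y)"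
  unfolding clock_def by blast

lemma clock_sound: "clock c k F \<Longrightarrow> length xs = k \<Longrightarrow> F (t # xs) = Suc y \<Longrightarrow> eval c xs y"
  unfolding clock_def by blast

lemma clock_stable:
  "clock c k F \<Longrightarrow> length xs = k \<Longrightarrow> t \<le> t' \<Longrightarrow> F (t # xs) = Suc y \<Longrightarrow> F (t' # xs) = Suc y"
  unfolding clock_def by blast

lemma clock_stable_nonzero:
  "clock c k F \<Longrightarrow> length xs = k \<Longrightarrow> t \<le> t' \<Longrightarrow> F (t # xs) \<noteq> 0 \<Longrightarrow> F (t' # xs) = F (t # xs)"
  using clock_stable not0_implies_Suc by metis

lemma clock_eventually:
  assumes "clock c k F" and "length xs = k" and "eval c xs y"
  shows "\<forall>\<^sub>F t in sequentially. F (t # xs) = Suc y"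
proof -
  obtain t0 where "F (t0 # xs) = Suc y" using assms unfolding clock_def by blast
  then show ?thesis
    unfolding eventually_sequentially using clock_stable[OF assms(1,2)] by blast
qed

lemma has_clockI:
  assumes "\<And>k. \<exists>F. computable_nat (Suc k) F \<and> clock c k F"
  shows "has_clock c"
  using assms unfolding has_clock_def by blast

lemma clock_never_halts: "(\<And>xs y. length xs = k \<Longrightarrow> \<not> eval c xs y) \<Longrightarrow> clock c k (\<lambda>zs. 0)"
  unfolding clock_def by simp

lemma has_clock_Zero: "has_clock Zero"
proof (rule has_clockI)
  fix k
  have "clock Zero k (\<lambda>zs. 1)"
    unfolding clock_def by (auto intro: eval_Zero elim: eval_ZeroE)
  then show "\<exists>F. computable_nat (Suc k) F \<and> clock Zero k F"
    using computable_nat_const by blast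
qed

lemma has_clock_Succ: "has_clock Succ"
proof (rule has_clockI)
  fix k
  show "\<exists>F. computable_nat (Suc k) F \<and> clock Succ k F"
  proof (cases k)
    case 0
    then show ?thesis
      using computable_nat_const clock_never_halts by (metis eval_SuccE length_0_conv list.simps(3))
  next
    case (Suc k')
    have "clock Succ k (\<lambda>zs. Suc (Suc (zs ! 1)))"
      unfolding clock_def using Suc
      by (auto simp: length_Suc_conv intro: eval_Succ elim: eval_SuccE)
    moreover have "computable_nat (Suc k) (\<lambda>zs. Suc (Suc (zs ! 1)))"
      using Suc by (intro computable1_comp[OF computable1_Suc] computable_nat_proj) simp
    ultimately show ?thesis by blast
  qed
qed

lemma has_clock_Proj: "has_clock (Proj i)"
proof (rule has_clockI)
  fix k
  show "\<exists>F. computable_nat (Suc k) F \<and> clock (Proj i) k F"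
  proof (cases "i < k")
    case False
    then show ?thesis
      using computable_nat_const clock_never_halts by (metis eval_ProjE)
  next
    case True
    have "clock (Proj i) k (\<lambda>zs. Suc (zs ! Suc i))"
      unfolding clock_def using True by (auto intro: eval_Proj elim: eval_ProjE)
    moreover have "computable_nat (Suc k) (\<lambda>zs. Suc (zs ! Suc i))"
      using True by (intro computable1_comp[OF computable1_Suc] computable_nat_proj) simp
    ultimately show ?thesis by blast
  qed
qed

definition comp_args :: "(nat list \<Rightarrow> nat) list \<Rightarrow> nat list \<Rightarrow> nat list" where
  "comp_args Fs zs = map (\<lambda>G. G zs - 1) Fs"

definition comp_clock :: "(nat list \<Rightarrow> nat) \<Rightarrow> (nat list \<Rightarrow> nat) list \<Rightarrow> nat list \<Rightarrow> nat" where
  "comp_clock Ff Fs zs = (if \<forall>G\<in>set Fs. G zs \<noteq> 0 then Ff (hd zs # comp_args Fs zs) else 0)"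

lemma comp_clock_eq_Suc:
  "comp_clock Ff Fs (t # xs) = Suc y \<longleftrightarrow>
     (\<forall>i<length Fs. (Fs ! i) (t # xs) = Suc (comp_args Fs (t # xs) ! i)) \<and>
     Ff (t # comp_args Fs (t # xs)) = Suc y"
  by (auto simp: comp_clock_def comp_args_def all_set_conv_all_nth)

lemma comp_clock_stable:
  assumes f: "clock f (length Fs) Ff" and gs: "list_all2 (\<lambda>g G. clock g k G) gs Fs"
    and xs: "length xs = k" and tt: "t \<le> t'" and y: "comp_clock Ff Fs (t # xs) = Suc y"
  shows "comp_clock Ff Fs (t' # xs) = Suc y"
proof -
  have "\<forall>i<length Fs. (Fs ! i) (t' # xs) = Suc (comp_args Fs (t # xs) ! i)"
    using y gs clock_stable[OF _ xs tt]
    by (auto simp: comp_clock_eq_Suc list_all2_conv_all_nth)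
  moreover from this have "comp_args Fs (t' # xs) = comp_args Fs (t # xs)"
    by (intro nth_equalityI) (simp_all add: comp_args_def)
  moreover have "Ff (t' # comp_args Fs (t # xs)) = Suc y"
    using y clock_stable[OF f _ tt] by (simp add: comp_clock_eq_Suc comp_args_def)
  ultimately show ?thesis by (simp add: comp_clock_eq_Suc)
qed

lemma comp_clock_halts:
  assumes f: "clock f (length Fs) Ff" and gs: "list_all2 (\<lambda>g G. clock g k G) gs Fs"
    and xs: "length xs = k"
  shows "eval (Comp f gs) xs y \<longleftrightarrow> (\<exists>t. comp_clock Ff Fs (t # xs) = Suc y)"
proof
  have len: "length gs = length Fs" using gs by (rule list_all2_lengthD)
  have clk: "clock (gs ! i) k (Fs ! i)" if "i < length Fs" for i
    using gs that by (simp add: list_all2_conv_all_nth)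
  {
    assume "eval (Comp f gs) xs y"
    then obtain zs where zs: "length zs = length gs" "\<forall>i<length gs. eval (gs ! i) xs (zs ! i)"
      and y: "eval f zs y"
      by (auto elim: eval_CompE)
    have "\<forall>\<^sub>F t in sequentially. \<forall>i\<in>{..<length Fs}. (Fs ! i) (t # xs) = Suc (zs ! i)"
      using clock_eventually[OF clk xs] zs len by (intro eventually_ball_finite) auto
    moreover have "\<forall>\<^sub>F t in sequentially. Ff (t # zs) = Suc y"
      using clock_eventually[OF f _ y] zs len by simp
    ultimately obtain t where t: "\<forall>i<length Fs. (Fs ! i) (t # xs) = Suc (zs ! i)"
      and "Ff (t # zs) = Suc y"
      using eventually_happens'[OF sequentially_bot eventually_conj] by blast
    moreover have "comp_args Fs (t # xs) = zs"
      using t zs len by (intro nth_equalityI) (auto simp: comp_args_def)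
    ultimately show "\<exists>t. comp_clock Ff Fs (t # xs) = Suc y" by (auto simp: comp_clock_eq_Suc)
  next
    assume "\<exists>t. comp_clock Ff Fs (t # xs) = Suc y"
    then obtain t where args: "\<forall>i<length Fs. (Fs ! i) (t # xs) = Suc (comp_args Fs (t # xs) ! i)"
      and y: "Ff (t # comp_args Fs (t # xs)) = Suc y"
      by (auto simp: comp_clock_eq_Suc)
    show "eval (Comp f gs) xs y"
    proof (rule eval_Comp[where ys = "comp_args Fs (t # xs)"])
      show "length (comp_args Fs (t # xs)) = length gs" by (simp add: comp_args_def len)
      show "\<forall>i<length gs. eval (gs ! i) xs (comp_args Fs (t # xs) ! i)"
        using clock_sound[OF clk xs] args len by auto
      show "eval f (comp_args Fs (t # xs)) y"
        using clock_sound[OF f _ y] by (simp add: comp_args_def)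
    qed
  }
qed

lemma clock_Comp:
  assumes "clock f (length Fs) Ff" and "list_all2 (\<lambda>g G. clock g k G) gs Fs"
  shows "clock (Comp f gs) k (comp_clock Ff Fs)"
  unfolding clock_def using comp_clock_halts[OF assms] comp_clock_stable[OF assms] by blast

lemma computable_pred_all_nonzero:
  "(\<And>G. G \<in> set Gs \<Longrightarrow> computable_nat k G) \<Longrightarrow> computable_pred k (\<lambda>xs. \<forall>G\<in>set Gs. G xs \<noteq> 0)"
proof (induction Gs)
  case Nil
  show ?case unfolding computable_pred_def using computable_nat_const[of k 1] by simp
next
  case (Cons G Gs)
  then show ?case
    by (auto intro: computable_pred_cong[OF computable_pred_conj[OF computable_pred_not[OF
          computable_pred_eq_0]]])
qed

lemma computable_comp_clock:
  assumes Ff: "computable_nat (Suc (length Fs)) Ff"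
    and Fs: "\<And>G. G \<in> set Fs \<Longrightarrow> computable_nat (Suc k) G"
  shows "computable_nat (Suc k) (comp_clock Ff Fs)"
proof -
  have "computable_vec (Suc k) (Suc (length Fs)) (\<lambda>zs. zs ! 0 # comp_args Fs zs)"
    using computable_vec_map[of "map (\<lambda>G zs. G zs - 1) Fs"] Fs
    by (intro computable_vec_Cons computable_nat_proj)
      (auto simp: comp_def comp_args_def intro: computable_nat_minus[OF _ computable_nat_const])
  from computable_nat_if[OF computable_pred_all_nonzero[OF Fs] computable_nat_comp[OF Ff this]
      computable_nat_const]
  show ?thesis by (rule computable_nat_cong) (auto simp: comp_clock_def length_Suc_conv)
qed

lemma has_clock_Comp:
  assumes f: "has_clock f" and gs: "\<And>g. g \<in> set gs \<Longrightarrow> has_clock g"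
  shows "has_clock (Comp f gs)"
proof (rule has_clockI)
  fix k
  have "\<forall>g\<in>set gs. \<exists>F. computable_nat (Suc k) F \<and> clock g k F"
    using gs unfolding has_clock_def by blast
  then obtain Cl where Cl: "\<And>g. g \<in> set gs \<Longrightarrow> computable_nat (Suc k) (Cl g) \<and> clock g k (Cl g)"
    by metis
  obtain Ff where Ff: "computable_nat (Suc (length gs)) Ff" "clock f (length gs) Ff"
    using f unfolding has_clock_def by blast
  have "computable_nat (Suc k) (comp_clock Ff (map Cl gs))"
    using Ff(1) Cl by (intro computable_comp_clock) auto
  moreover have "clock (Comp f gs) k (comp_clock Ff (map Cl gs))"
    using Ff(2) Cl by (intro clock_Comp) (simp_all add: list_all2_conv_all_nth)
  ultimately show "\<exists>F. computable_nat (Suc k) F \<and> clock (Comp f gs) k F" by blast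
qed

definition primrec_clock :: "(nat list \<Rightarrow> nat) \<Rightarrow> (nat list \<Rightarrow> nat) \<Rightarrow> nat \<Rightarrow> nat \<Rightarrow> nat list \<Rightarrow> nat" where
  "primrec_clock Ff Fg t n xs =
     rec_nat (Ff (t # xs)) (\<lambda>i v. if v = 0 then 0 else Fg (t # (v - 1) # i # xs)) n"

lemma primrec_clock_0 [simp]: "primrec_clock Ff Fg t 0 xs = Ff (t # xs)"
  by (simp add: primrec_clock_def)

lemma primrec_clock_Suc [simp]:
  "primrec_clock Ff Fg t (Suc n) xs =
     (if primrec_clock Ff Fg t n xs = 0 then 0
      else Fg (t # (primrec_clock Ff Fg t n xs - 1) # n # xs))"
  by (simp add: primrec_clock_def)

lemma primrec_clock_stable:
  assumes f: "clock f k Ff" and g: "clock g (Suc (Suc k)) Fg" and xs: "length xs = k"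
  shows "t \<le> t' \<Longrightarrow> primrec_clock Ff Fg t n xs = Suc y \<Longrightarrow> primrec_clock Ff Fg t' n xs = Suc y"
proof (induction n arbitrary: y)
  case 0
  then show ?case using clock_stable[OF f xs] by simp
next
  case (Suc n)
  then obtain v where v: "primrec_clock Ff Fg t n xs = Suc v" and "Fg (t # v # n # xs) = Suc y"
    by (cases "primrec_clock Ff Fg t n xs") (auto split: if_splits)
  then have "Fg (t' # v # n # xs) = Suc y" using clock_stable[OF g _ Suc.prems(1)] xs by simp
  then show ?case using Suc.IH[OF Suc.prems(1) v] v by simp
qed

lemma primrec_clock_halts:
  assumes f: "clock f k Ff" and g: "clock g (Suc (Suc k)) Fg" and xs: "length xs = k"
  shows "eval (PrimRec f g) (n # xs) y \<longleftrightarrow> (\<exists>t. primrec_clock Ff Fg t n xs = Suc y)"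
proof (induction n arbitrary: y)
  case 0
  have "eval (PrimRec f g) (0 # xs) y \<longleftrightarrow> eval f xs y"
    by (auto intro: eval_Pr0 elim: eval_PrimRecE)
  then show ?case using f xs by (simp add: clock_def)
next
  case (Suc n)
  have "eval (PrimRec f g) (Suc n # xs) z \<longleftrightarrow>
      (\<exists>v. eval (PrimRec f g) (n # xs) v \<and> eval g (v # n # xs) z)"
    for z by (auto intro: eval_PrS elim: eval_PrimRecE)
  also have "\<dots> z \<longleftrightarrow> (\<exists>t. primrec_clock Ff Fg t (Suc n) xs = Suc z)" for z
  proof
    assume "\<exists>v. eval (PrimRec f g) (n # xs) v \<and> eval g (v # n # xs) z"
    then obtain v t0 where v: "primrec_clock Ff Fg t0 n xs = Suc v" and z: "eval g (v # n # xs) z"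
      using Suc.IH by blast
    have "\<forall>\<^sub>F t in sequentially. primrec_clock Ff Fg t n xs = Suc v"
      unfolding eventually_sequentially using primrec_clock_stable[OF f g xs _ v] by blast
    moreover have "\<forall>\<^sub>F t in sequentially. Fg (t # v # n # xs) = Suc z"
      using clock_eventually[OF g _ z] xs by simp
    ultimately obtain t where "primrec_clock Ff Fg t n xs = Suc v" "Fg (t # v # n # xs) = Suc z"
      using eventually_happens'[OF sequentially_bot eventually_conj] by blast
    then show "\<exists>t. primrec_clock Ff Fg t (Suc n) xs = Suc z" by (intro exI[of _ t]) simp
  next
    assume "\<exists>t. primrec_clock Ff Fg t (Suc n) xs = Suc z"
    then obtain t where "primrec_clock Ff Fg t (Suc n) xs = Suc z" ..
    then obtain v where "primrec_clock Ff Fg t n xs = Suc v" and "Fg (t # v # n # xs) = Suc z"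
      by (cases "primrec_clock Ff Fg t n xs") (auto split: if_splits)
    then show "\<exists>v. eval (PrimRec f g) (n # xs) v \<and> eval g (v # n # xs) z"
      using Suc.IH clock_sound[OF g] xs by fastforce
  qed
  finally show ?case .
qed

lemma computable_primrec_clock:
  assumes Ff: "computable_nat (Suc k) Ff" and Fg: "computable_nat (Suc (Suc (Suc k))) Fg"
  shows "computable_nat (Suc (Suc k)) (\<lambda>zs. primrec_clock Ff Fg (hd zs) (hd (tl zs)) (tl (tl zs)))"
proof -
  let ?n = "Suc (Suc (Suc k))"
  have "computable_vec ?n ?n (\<lambda>zs. zs ! 2 # (zs ! 0 - 1) # zs ! 1 # drop 3 zs)"
    by (intro computable_vec_Cons computable_nat_proj computable_vec_drop
        computable_nat_minus[OF _ computable_nat_const]) simp_all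
  from computable_nat_if[OF computable_pred_eq_0[OF computable_nat_proj] computable_nat_const
      computable_nat_comp[OF Fg this]]
  have "computable_nat ?n
      (\<lambda>zs. if zs ! 0 = 0 then 0 else Fg (zs ! 2 # (zs ! 0 - 1) # zs ! 1 # drop 3 zs))"
    by simp
  from computable_nat_rec_nat[OF Ff this]
  have "computable_nat (Suc (Suc k)) (\<lambda>zs. primrec_clock Ff Fg (hd (tl zs)) (hd zs) (tl (tl zs)))"
    by (rule computable_nat_cong)
      (auto simp: primrec_clock_def length_Suc_conv numeral_2_eq_2 numeral_3_eq_3 cong: if_cong)
  moreover have "computable_vec (Suc (Suc k)) (Suc (Suc k)) (\<lambda>zs. zs ! 1 # zs ! 0 # drop 2 zs)"
    by (intro computable_vec_Cons computable_nat_proj computable_vec_drop) simp_all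
  ultimately show ?thesis
    by (rule computable_nat_comp[THEN computable_nat_cong]) (auto simp: length_Suc_conv)
qed

lemma has_clock_PrimRec:
  assumes f: "has_clock f" and g: "has_clock g"
  shows "has_clock (PrimRec f g)"
proof (rule has_clockI)
  fix k
  show "\<exists>F. computable_nat (Suc k) F \<and> clock (PrimRec f g) k F"
  proof (cases k)
    case 0
    then show ?thesis
      using computable_nat_const clock_never_halts
      by (metis eval_PrimRecE length_0_conv list.simps(3))
  next
    case (Suc k')
    obtain Ff where Ff: "computable_nat (Suc k') Ff" "clock f k' Ff"
      using f unfolding has_clock_def by blast
    obtain Fg where Fg: "computable_nat (Suc (Suc (Suc k'))) Fg" "clock g (Suc (Suc k')) Fg"
      using g unfolding has_clock_def by blast
    have "clock (PrimRec f g) k (\<lambda>zs. primrec_clock Ff Fg (hd zs) (hd (tl zs)) (tl (tl zs)))"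
      unfolding clock_def
      using Suc primrec_clock_halts[OF Ff(2) Fg(2)] primrec_clock_stable[OF Ff(2) Fg(2)]
      by (auto simp: length_Suc_conv)
    then show ?thesis using computable_primrec_clock[OF Ff(1) Fg(1)] Suc by blast
  qed
qed

text \<open>The clock values \<open>1\<close> and \<open>\<ge> 2\<close> stand for the results \<open>0\<close> and positive.\<close>

definition mu_found :: "(nat list \<Rightarrow> nat) \<Rightarrow> nat \<Rightarrow> nat list \<Rightarrow> nat \<Rightarrow> bool" where
  "mu_found Ff t xs n \<longleftrightarrow> Ff (t # n # xs) = 1 \<and> (\<forall>m<n. 2 \<le> Ff (t # m # xs))"

definition mu_clock :: "(nat list \<Rightarrow> nat) \<Rightarrow> nat \<Rightarrow> nat list \<Rightarrow> nat" where
  "mu_clock Ff t xs = (\<Sum>n<t. if mu_found Ff t xs n then Suc n else 0)"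

lemma mu_found_unique: "mu_found Ff t xs n \<Longrightarrow> mu_found Ff t xs m \<Longrightarrow> n = m"
  by (cases n m rule: linorder_cases) (auto simp: mu_found_def)

lemma sum_if_unique_eq_Suc:
  assumes unique: "\<And>n m. P n \<Longrightarrow> P m \<Longrightarrow> n = m"
  shows "(\<Sum>n<t. if P n then Suc n else 0) = Suc y \<longleftrightarrow> P y \<and> y < t"
proof (cases "\<exists>n<t. P n")
  case True
  then obtain n0 where n0: "n0 < t" "P n0" by blast
  have "(\<Sum>n<t. if P n then Suc n else 0) = (\<Sum>n<t. if n = n0 then Suc n else 0)"
    using unique n0(2) by (intro sum.cong) auto
  also have "\<dots> = Suc n0" using n0(1) by simp
  finally show ?thesis using unique n0 by auto
next
  case False
  then show ?thesis by auto
qed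

lemma mu_clock_eq_Suc: "mu_clock Ff t xs = Suc y \<longleftrightarrow> mu_found Ff t xs y \<and> y < t"
  unfolding mu_clock_def by (rule sum_if_unique_eq_Suc) (rule mu_found_unique)

lemma mu_found_stable:
  assumes f: "clock f (Suc k) Ff" and xs: "length xs = k"
    and found: "mu_found Ff t xs y" and tt: "t \<le> t'"
  shows "mu_found Ff t' xs y"
proof -
  have "Ff (t # m # xs) \<noteq> 0" if "m \<le> y" for m
    using found that unfolding mu_found_def by (force simp: le_less)
  then have "Ff (t' # m # xs) = Ff (t # m # xs)" if "m \<le> y" for m
    using clock_stable_nonzero[OF f _ tt] xs that by simp
  then show ?thesis using found unfolding mu_found_def by simp
qed

lemma mu_found_eventually:
  assumes f: "clock f (Suc k) Ff" and xs: "length xs = k" and y: "eval (Mu f) xs y"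
  shows "\<forall>\<^sub>F t in sequentially. mu_found Ff t xs y \<and> y < t"
proof -
  from y have zero: "eval f (y # xs) 0" and pos: "\<forall>m<y. \<exists>v>0. eval f (m # xs) v"
    by (auto elim: eval_MuE)
  have "\<forall>\<^sub>F t in sequentially. \<forall>m\<in>{..<y}. 2 \<le> Ff (t # m # xs)"
  proof (intro eventually_ball_finite ballI)
    fix m assume "m \<in> {..<y}"
    then obtain v where "v > 0" and v: "eval f (m # xs) v" using pos by auto
    then show "\<forall>\<^sub>F t in sequentially. 2 \<le> Ff (t # m # xs)"
      using clock_eventually[OF f _ v] xs by (auto elim: eventually_mono)
  qed simp
  moreover have "\<forall>\<^sub>F t in sequentially. Ff (t # y # xs) = 1"
    using clock_eventually[OF f _ zero] xs by simp
  moreover have "\<forall>\<^sub>F t in sequentially. y < t" by simp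
  ultimately show ?thesis unfolding mu_found_def by eventually_elim auto
qed

lemma mu_found_sound:
  assumes f: "clock f (Suc k) Ff" and xs: "length xs = k" and found: "mu_found Ff t xs y"
  shows "eval (Mu f) xs y"
proof (rule eval_Mu)
  show "eval f (y # xs) 0"
    using found clock_sound[OF f, of "y # xs" t 0] xs by (simp add: mu_found_def)
  show "\<forall>m<y. \<exists>v>0. eval f (m # xs) v"
  proof (intro allI impI)
    fix m assume "m < y"
    then have v: "Ff (t # m # xs) = Suc (Ff (t # m # xs) - 1)" and "Ff (t # m # xs) - 1 > 0"
      using found by (auto simp: mu_found_def)
    moreover have "eval f (m # xs) (Ff (t # m # xs) - 1)"
      using clock_sound[OF f _ v] xs by simp
    ultimately show "\<exists>v>0. eval f (m # xs) v" by blast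
  qed
qed

lemma clock_Mu:
  assumes f: "clock f (Suc k) Ff"
  shows "clock (Mu f) k (\<lambda>zs. mu_clock Ff (hd zs) (tl zs))"
proof -
  have "eval (Mu f) xs y \<longleftrightarrow> (\<exists>t. mu_found Ff t xs y \<and> y < t)" if xs: "length xs = k" for xs y
    using mu_found_sound[OF f xs]
      eventually_happens'[OF sequentially_bot mu_found_eventually[OF f xs]]
    by blast
  moreover have "mu_found Ff t' xs y \<and> y < t'"
    if "length xs = k" "t \<le> t'" "mu_found Ff t xs y \<and> y < t" for xs t t' y
    using that mu_found_stable[OF f] by auto
  ultimately show ?thesis unfolding clock_def mu_clock_eq_Suc list.sel by blast
qed

lemma computable_mu_clock:
  assumes Ff: "computable_nat (Suc (Suc k)) Ff"
  shows "computable_nat (Suc k) (\<lambda>zs. mu_clock Ff (hd zs) (tl zs))"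
proof -
  have "computable_vec (Suc (Suc k)) (Suc (Suc k)) (\<lambda>zs. zs ! 1 # zs ! 0 # drop 2 zs)"
    by (intro computable_vec_Cons computable_nat_proj computable_vec_drop) simp_all
  note value_is_1 =
    computable_pred_eq[OF computable_nat_comp[OF Ff this] computable_nat_const[of _ 1]]
  have "computable_vec (Suc (Suc (Suc k))) (Suc (Suc k)) (\<lambda>zs. zs ! 2 # zs ! 0 # drop 3 zs)"
    by (intro computable_vec_Cons computable_nat_proj computable_vec_drop) simp_all
  note values_ge_2 = computable_pred_ball[OF computable_nat_proj
      computable_pred_le[OF computable_nat_const[of _ 2] computable_nat_comp[OF Ff this]]]
  have "computable_pred (Suc (Suc k)) (\<lambda>zs. mu_found Ff (zs ! 1) (drop 2 zs) (zs ! 0))"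
    using computable_pred_conj[OF value_is_1 values_ge_2]
    by (rule computable_pred_cong) (auto simp: mu_found_def numeral_2_eq_2 numeral_3_eq_3)
  from computable_nat_sum[OF computable_nat_proj[of 0 "Suc k"] computable_nat_if[OF this
      computable1_comp[OF computable1_Suc computable_nat_proj[of 0]] computable_nat_const[of _ 0]]]
  show ?thesis
    by (rule computable_nat_cong) (auto simp: mu_clock_def length_Suc_conv cong: if_cong)
qed

lemma has_clock_Mu:
  assumes "has_clock f"
  shows "has_clock (Mu f)"
proof (rule has_clockI)
  fix k
  obtain Ff where Ff: "computable_nat (Suc (Suc k)) Ff" "clock f (Suc k) Ff"
    using assms unfolding has_clock_def by blast
  then show "\<exists>F. computable_nat (Suc k) F \<and> clock (Mu f) k F"
    using computable_mu_clock clock_Mu by blast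
qed

theorem has_clock: "has_clock c"
proof (induction c)
  case (Comp f gs)
  then show ?case by (intro has_clock_Comp) simp_all
qed (simp_all add: has_clock_Zero has_clock_Succ has_clock_Proj has_clock_PrimRec has_clock_Mu)

subsection \<open>Computably enumerable sets as projections of decidable relations\<close>

lemma ce_set_projection:
  assumes "ce_set A"
  obtains R where "computable_pred 2 R" and "\<And>n. n \<in> A \<longleftrightarrow> (\<exists>t. R [t, n])"
proof -
  obtain c where c: "\<And>n. n \<in> A \<longleftrightarrow> (\<exists>y. eval c [n] y)"
    using assms unfolding ce_set_def by blast
  obtain F where F: "computable_nat (Suc 1) F" "clock c 1 F"
    using has_clock[of c] unfolding has_clock_def by blast
  have "n \<in> A \<longleftrightarrow> (\<exists>t. F [t, n] \<noteq> 0)" for n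
  proof -
    have "eval c [n] y \<longleftrightarrow> (\<exists>t. F [t, n] = Suc y)" for y
      using clock_halts[OF F(2)] by simp
    then show ?thesis unfolding c by (metis not0_implies_Suc nat.simps(3))
  qed
  moreover have "computable_pred 2 (\<lambda>zs. F zs \<noteq> 0)"
    using computable_pred_not[OF computable_pred_eq_0[OF F(1)]] by (simp add: numeral_2_eq_2)
  ultimately show thesis using that by blast
qed

lemma ce_set_projectionI:
  assumes R: "computable_pred 2 R"
  shows "ce_set {n. \<exists>t. R [t, n]}"
proof -
  obtain r where r: "\<And>zs. length zs = 2 \<Longrightarrow> eval r zs (of_bool (\<not> R zs))"
    using computable_pred_not[OF R] unfolding computable_pred_def computable_nat_def by blast
  have "(\<exists>t. R [t, n]) \<longleftrightarrow> (\<exists>y. eval (Mu r) [n] y)" for n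
  proof
    assume "\<exists>t. R [t, n]"
    define t0 where "t0 = (LEAST t. R [t, n])"
    have "R [t0, n]" using \<open>\<exists>t. R [t, n]\<close> unfolding t0_def by (rule LeastI_ex)
    then have "eval r [t0, n] 0" using r[of "[t0, n]"] by simp
    moreover have "eval r [m, n] 1" if "m < t0" for m
      using r[of "[m, n]"] not_less_Least[OF that[unfolded t0_def]] by simp
    ultimately have "eval (Mu r) [n] t0"
      using zero_less_one by (intro eval_Mu) blast+
    then show "\<exists>y. eval (Mu r) [n] y" ..
  next
    assume "\<exists>y. eval (Mu r) [n] y"
    then obtain t where zero: "eval r [t, n] 0" by (auto elim: eval_MuE)
    have "eval r [t, n] (of_bool (\<not> R [t, n]))" by (rule r) simp
    from eval_deterministic[OF this zero] show "\<exists>t. R [t, n]" by auto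
  qed
  then show ?thesis unfolding ce_set_def by auto
qed

lemma computable_pred_comp:
  "computable_pred m P \<Longrightarrow> computable_vec k m A \<Longrightarrow> computable_pred k (\<lambda>xs. P (A xs))"
  unfolding computable_pred_def by (rule computable_nat_comp)

lemma ce_set_Ex:
  assumes A: "ce_set A" and D: "computable_pred 3 D"
  shows "ce_set {j. \<exists>a\<in>A. \<exists>N. D [a, j, N]}"
proof -
  obtain R where R: "computable_pred 2 R" and A_eq: "\<And>a. a \<in> A \<longleftrightarrow> (\<exists>t. R [t, a])"
    using ce_set_projection[OF A] by blast
  \<comment> \<open>a single bound \<open>p\<close> dovetails the searches for \<open>a\<close>, its halting stage \<open>t\<close> and \<open>N\<close>\<close>
  define Q where "Q p j \<longleftrightarrow> (\<exists>a<p. \<exists>t<p. \<exists>N<p. R [t, a] \<and> D [a, j, N])" for p j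
  have "computable_vec 5 2 (\<lambda>e. [e ! 1, e ! 2])"
    by (simp add: numeral_eq_Suc)
      (intro computable_vec_Cons computable_vec_Nil computable_nat_proj; simp)
  moreover have "computable_vec 5 3 (\<lambda>e. [e ! 2, e ! 4, e ! 0])"
    by (simp add: numeral_eq_Suc)
      (intro computable_vec_Cons computable_vec_Nil computable_nat_proj; simp)
  ultimately have "computable_pred 5 (\<lambda>e. R [e ! 1, e ! 2] \<and> D [e ! 2, e ! 4, e ! 0])"
    using computable_pred_conj computable_pred_comp R D by blast
  from computable_pred_bex[OF computable_nat_proj[of 2 4], simplified, OF this]
  have "computable_pred 4 (\<lambda>e. \<exists>N<e ! 2. R [e ! 0, e ! 1] \<and> D [e ! 1, e ! 3, N])"
    by (simp add: numeral_eq_Suc)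
  from computable_pred_bex[OF computable_nat_proj[of 1 3], simplified, OF this]
  have "computable_pred 3 (\<lambda>e. \<exists>t<e ! 1. \<exists>N<e ! 1. R [t, e ! 0] \<and> D [e ! 0, e ! 2, N])"
    by (simp add: numeral_eq_Suc)
  from computable_pred_bex[OF computable_nat_proj[of 0 2], simplified, OF this]
  have "computable_pred 2 (\<lambda>e. Q (e ! 0) (e ! 1))"
    by (simp add: numeral_eq_Suc Q_def)
  then have "ce_set {j. \<exists>p. Q p j}"
    using ce_set_projectionI by fastforce
  moreover have "(\<exists>a\<in>A. \<exists>N. D [a, j, N]) \<longleftrightarrow> (\<exists>p. Q p j)" for j
  proof
    assume "\<exists>a\<in>A. \<exists>N. D [a, j, N]"
    then obtain a t N where "R [t, a]" "D [a, j, N]" using A_eq by blast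
    then have "Q (Suc (max a (max t N))) j" unfolding Q_def
      by (intro exI[of _ a] conjI exI[of _ t] exI[of _ N]) auto
    then show "\<exists>p. Q p j" ..
  next
    assume "\<exists>p. Q p j"
    then show "\<exists>a\<in>A. \<exists>N. D [a, j, N]" using A_eq unfolding Q_def by blast
  qed
  ultimately show ?thesis by simp
qed

subsection \<open>Finite unions of rational balls\<close>

definition ball_indices :: "(nat \<Rightarrow> nat \<Rightarrow> nat) \<Rightarrow> (nat \<Rightarrow> nat) \<Rightarrow> nat \<Rightarrow> nat set" where
  "ball_indices \<sigma> \<eta> j = {\<sigma> j k | k. k \<le> \<eta> j}"

lemma rballs_eq_UN_ball_indices:
  "rballs \<alpha> q \<tau>1 \<tau>2 \<sigma> \<eta> j = (\<Union>i\<in>ball_indices \<sigma> \<eta> j. rball \<alpha> q \<tau>1 \<tau>2 i)"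
  by (simp add: rballs_def ball_indices_def)

lemma ball_indices_eq_image: "ball_indices \<sigma> \<eta> j = \<sigma> j ` {..\<eta> j}"
  by (auto simp: ball_indices_def)

lemma admissible_enums_obtain_ball_indices:
  assumes "admissible_enums q \<tau>1 \<tau>2 \<sigma> \<eta>" and "finite I" and "I \<noteq> {}"
  obtains j where "ball_indices \<sigma> \<eta> j = I"
proof -
  obtain ls where ls: "set ls = I" using finite_list[OF assms(2)] by blast
  then have "ls \<in> range (\<lambda>j. map (\<sigma> j) [0..<Suc (\<eta> j)])"
    using assms(1,3) unfolding admissible_enums_def by auto
  then obtain j where "map (\<sigma> j) [0..<Suc (\<eta> j)] = ls" by blast
  then have "ball_indices \<sigma> \<eta> j = I"
    using ls
    by (auto simp: ball_indices_eq_image atLeast0LessThan lessThan_Suc_atMost simp del: upt_Suc)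
  then show thesis by (rule that)
qed

lemma compact_cover_by_open_and_complement:
  fixes L S U :: "'a::topological_space set" and B :: "nat \<Rightarrow> 'a set"
  assumes "compact L" and "S \<subseteq> L" and "open U" and "S \<subseteq> U"
    and "\<And>i. open (B i)" and "- S \<subseteq> (\<Union>i. B i)"
  obtains N where "L \<subseteq> U \<union> (\<Union>i<N. B i)"
proof -
  have cover: "L \<subseteq> (\<Union>N\<in>UNIV. U \<union> (\<Union>i<N. B i))"
  proof
    fix x assume "x \<in> L"
    show "x \<in> (\<Union>N\<in>UNIV. U \<union> (\<Union>i<N. B i))"
    proof (cases "x \<in> S")
      case False
      then obtain i where "x \<in> B i" using assms(6) by blast
      then show ?thesis by blast
    qed (use assms(4) in blast)
  qed
  obtain D where "finite D" and D: "L \<subseteq> (\<Union>N\<in>D. U \<union> (\<Union>i<N. B i))"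
    by (rule compactE_image[OF assms(1) _ cover]) (use assms(3,5) in auto)
  then obtain N where "D \<subseteq> {..<N}" by (auto simp: finite_nat_iff_bounded)
  then have "U \<union> (\<Union>i<N'. B i) \<subseteq> U \<union> (\<Union>i<N. B i)" if "N' \<in> D" for N'
    using that by auto
  with D have "L \<subseteq> U \<union> (\<Union>i<N. B i)" by blast
  then show thesis by (rule that)
qed

lemma subset_rballs_iff:
  fixes f :: "nat \<Rightarrow> nat"
  assumes enums: "admissible_enums q \<tau>1 \<tau>2 \<sigma> \<eta>" and L: "compact L" "S \<subseteq> L"
    and co: "- S = (\<Union>i. rball \<alpha> q \<tau>1 \<tau>2 (f i))"
  shows "S \<subseteq> rballs \<alpha> q \<tau>1 \<tau>2 \<sigma> \<eta> j \<longleftrightarrow>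
    (\<exists>j'. L \<subseteq> rballs \<alpha> q \<tau>1 \<tau>2 \<sigma> \<eta> j' \<and>
      (\<exists>N. ball_indices \<sigma> \<eta> j' \<subseteq> ball_indices \<sigma> \<eta> j \<union> f ` {..<N}))"
    (is "S \<subseteq> ?J j \<longleftrightarrow> _")
proof
  assume "S \<subseteq> ?J j"
  have "open (?J j)" by (simp add: rballs_eq_UN_ball_indices rball_def open_UN)
  moreover have "open (rball \<alpha> q \<tau>1 \<tau>2 (f i))" for i by (simp add: rball_def)
  moreover have "- S \<subseteq> (\<Union>i. rball \<alpha> q \<tau>1 \<tau>2 (f i))" using co by simp
  ultimately obtain N where N: "L \<subseteq> ?J j \<union> (\<Union>i<N. rball \<alpha> q \<tau>1 \<tau>2 (f i))"
    by (rule compact_cover_by_open_and_complement[OF L _ \<open>S \<subseteq> ?J j\<close>])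
  have "finite (ball_indices \<sigma> \<eta> j \<union> f ` {..<N})" and "ball_indices \<sigma> \<eta> j \<union> f ` {..<N} \<noteq> {}"
    by (simp_all add: ball_indices_eq_image)
  then obtain j' where j': "ball_indices \<sigma> \<eta> j' = ball_indices \<sigma> \<eta> j \<union> f ` {..<N}"
    by (rule admissible_enums_obtain_ball_indices[OF enums])
  then have "?J j' = ?J j \<union> (\<Union>i<N. rball \<alpha> q \<tau>1 \<tau>2 (f i))"
    by (simp add: rballs_eq_UN_ball_indices)
  with N have "L \<subseteq> ?J j'" by simp
  with j' show "\<exists>j'. L \<subseteq> ?J j' \<and> (\<exists>N. ball_indices \<sigma> \<eta> j' \<subseteq> ball_indices \<sigma> \<eta> j \<union> f ` {..<N})"
    by auto
next
  assume "\<exists>j'. L \<subseteq> ?J j' \<and> (\<exists>N. ball_indices \<sigma> \<eta> j' \<subseteq> ball_indices \<sigma> \<eta> j \<union> f ` {..<N})"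
  then obtain j' N where SJ: "S \<subseteq> ?J j'"
    and sub: "ball_indices \<sigma> \<eta> j' \<subseteq> ball_indices \<sigma> \<eta> j \<union> f ` {..<N}"
    using L(2) by blast
  show "S \<subseteq> ?J j"
  proof
    fix x assume "x \<in> S"
    then have "x \<in> ?J j'" using SJ by blast
    then obtain i where i: "i \<in> ball_indices \<sigma> \<eta> j'" and x: "x \<in> rball \<alpha> q \<tau>1 \<tau>2 i"
      unfolding rballs_eq_UN_ball_indices by blast
    have "rball \<alpha> q \<tau>1 \<tau>2 (f n) \<subseteq> - S" for n unfolding co by blast
    then have "i \<notin> range f" using x \<open>x \<in> S\<close> by blast
    then have "i \<in> ball_indices \<sigma> \<eta> j" using i sub by blast
    with x show "x \<in> ?J j" unfolding rballs_eq_UN_ball_indices by blast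
  qed
qed

lemma computable_pred_ball_indices_subset:
  assumes \<sigma>: "computable2 \<sigma>" and \<eta>: "computable1 \<eta>" and f: "computable1 f"
  shows "computable_pred 3
    (\<lambda>e. ball_indices \<sigma> \<eta> (e ! 0) \<subseteq> ball_indices \<sigma> \<eta> (e ! 1) \<union> f ` {..<e ! 2})"
proof -
  have "computable_pred 5 (\<lambda>e. \<sigma> (e ! 2) (e ! 1) = \<sigma> (e ! 3) (e ! 0))"
    by (intro computable_pred_eq computable2_comp[OF \<sigma>] computable_nat_proj) simp_all
  from computable_pred_bex[OF computable1_comp[OF computable1_Suc computable1_comp[OF \<eta>
        computable_nat_proj[of 2 4]]], simplified, OF this]
  have in_j: "computable_pred 4 (\<lambda>e. \<exists>m<Suc (\<eta> (e ! 2)). \<sigma> (e ! 1) (e ! 0) = \<sigma> (e ! 2) m)"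
    by (simp add: numeral_eq_Suc)
  have "computable_pred 5 (\<lambda>e. \<sigma> (e ! 2) (e ! 1) = f (e ! 0))"
    by (intro computable_pred_eq computable2_comp[OF \<sigma>] computable1_comp[OF f] computable_nat_proj)
      simp_all
  from computable_pred_bex[OF computable_nat_proj[of 3 4], simplified, OF this]
  have in_f: "computable_pred 4 (\<lambda>e. \<exists>i<e ! 3. \<sigma> (e ! 1) (e ! 0) = f i)"
    by (simp add: numeral_eq_Suc)
  from computable_pred_ball[OF computable1_comp[OF computable1_Suc computable1_comp[OF \<eta>
        computable_nat_proj[of 0 3]]], simplified, OF computable_pred_disj[OF in_j in_f]]
  show ?thesis
    by (rule computable_pred_cong)
      (auto simp: numeral_eq_Suc ball_indices_def less_Suc_eq_le image_iff)
qed

theorem proposition3p2: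
  fixes \<alpha> :: "nat \<Rightarrow> 'a::metric_space" and S :: "'a set"
  assumes "admissible_enums q \<tau>1 \<tau>2 \<sigma> \<eta>"
    and "computable_metric_space \<alpha>"
    and "locally_computable \<alpha> q \<tau>1 \<tau>2 \<sigma> \<eta>"
    and "co_ce_closed \<alpha> q \<tau>1 \<tau>2 S"
    and "compact S"
  shows "semi_computable_compact \<alpha> q \<tau>1 \<tau>2 \<sigma> \<eta> S"
proof -
  obtain f where f: "computable1 f" and co: "- S = (\<Union>i. rball \<alpha> q \<tau>1 \<tau>2 (f i))"
    using assms(4) unfolding co_ce_closed_def by blast
  obtain L where "computable_compact \<alpha> q \<tau>1 \<tau>2 \<sigma> \<eta> L" and "S \<subseteq> L"
    using assms(3,5) unfolding locally_computable_def by blast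
  then have L: "compact L" "S \<subseteq> L" and "ce_set {j. L \<subseteq> rballs \<alpha> q \<tau>1 \<tau>2 \<sigma> \<eta> j}"
    unfolding computable_compact_def semi_computable_compact_def by auto
  moreover have "computable_pred 3
      (\<lambda>e. ball_indices \<sigma> \<eta> (e ! 0) \<subseteq> ball_indices \<sigma> \<eta> (e ! 1) \<union> f ` {..<e ! 2})"
    using assms(1) f
    by (intro computable_pred_ball_indices_subset) (auto simp: admissible_enums_def)
  ultimately have "ce_set {j. \<exists>j'\<in>{j. L \<subseteq> rballs \<alpha> q \<tau>1 \<tau>2 \<sigma> \<eta> j}.
      \<exists>N. ball_indices \<sigma> \<eta> j' \<subseteq> ball_indices \<sigma> \<eta> j \<union> f ` {..<N}}"
    by (auto dest: ce_set_Ex)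
  then show ?thesis
    unfolding semi_computable_compact_def subset_rballs_iff[OF assms(1) L co]
    using assms(5) by simp
qed

end
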